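(* Let $f(X)=N(N-1)\sum_{i=1}^{\ell}\beta_i\,t(H_i,X)$ be a subgraph-counting function. Then for every $X\in\{0,1\}^n$ and every index $j\in[n]$, $$|\partial_jf(X)|\le\sum_{i=1}^{\ell}|\beta_i|\,|E(H_i)|.$$
   Context: $n=\binom N2$; $X\in\{0,1\}^n$ is identified with a simple graph on $[N]$ (coordinates indexed by unordered pairs). For a finite simple graph $H$ on $[m]$, $t(H,X)$ is the number of injective homomorphisms $H\to X$ divided by $N(N-1)\cdots(N-m+1)$. $\partial_jf(X)=\frac12\big(f(X_1,\dots,X_{j-1},1,X_{j+1},\dots,X_n)-f(X_1,\dots,X_{j-1},0,X_{j+1},\dots,X_n)\big)$. *)

theory Defs
  imports Complex_Main "HOL-Library.FuncSet"
begin

text \<open>Unordered pairs of distinct vertices in [N] = {0..<N}; these index the n = N choose 2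
  coordinates. A vector X in {0,1}^n is identified with its edge set X \<subseteq> pairs N.\<close>
definition pairs :: "nat \<Rightarrow> nat set set" where
  "pairs N = {e. \<exists>a b. a < N \<and> b < N \<and> a \<noteq> b \<and> e = {a, b}}"

definition inj_hom_count :: "nat \<Rightarrow> nat set set \<Rightarrow> nat \<Rightarrow> nat set set \<Rightarrow> nat" where
  "inj_hom_count m E N X =
     card {\<phi> \<in> {0..<m} \<rightarrow>\<^sub>E {0..<N}. inj_on \<phi> {0..<m} \<and> (\<forall>e\<in>E. \<phi> ` e \<in> X)}"

definition hom_density :: "nat \<Rightarrow> nat set set \<Rightarrow> nat \<Rightarrow> nat set set \<Rightarrow> real" where
  "hom_density m E N X = real (inj_hom_count m E N X) / (\<Prod>k<m. (real N - real k))"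

definition subgraph_count_fun ::
  "nat \<Rightarrow> nat \<Rightarrow> (nat \<Rightarrow> nat) \<Rightarrow> (nat \<Rightarrow> nat set set) \<Rightarrow> (nat \<Rightarrow> real) \<Rightarrow> nat set set \<Rightarrow> real" where
  "subgraph_count_fun N l m E \<beta> X =
     real N * (real N - 1) * (\<Sum>i<l. \<beta> i * hom_density (m i) (E i) N X)"

definition disc_partial :: "(nat set set \<Rightarrow> real) \<Rightarrow> nat set \<Rightarrow> nat set set \<Rightarrow> real" where
  "disc_partial f e X = (f (insert e X) - f (X - {e})) / 2"

end

theory Submission
  imports Defs
begin

text \<open>Adding the edge e to X can only create injective homomorphisms, and each new one must
  map some edge f of H onto e. For fixed f there are at most 2 (N-2)(N-3)\<dots>(N-m+1) of these
  (two orientations, then an injection of the remaining m - 2 vertices into the remaining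
  N - 2), so the count changes by at most 2|E(H)| times that number. After dividing by the
  falling factorial N(N-1)\<dots>(N-m+1) and multiplying by N(N-1), each density term moves by
  at most 2|E(H)|, and the factor 1/2 in the discrete derivative absorbs the 2.\<close>

definition inj_funcset :: "'a set \<Rightarrow> 'b set \<Rightarrow> ('a \<Rightarrow> 'b) set" where
  "inj_funcset S T = {f \<in> S \<rightarrow>\<^sub>E T. inj_on f S}"

lemma finite_inj_funcset: "finite S \<Longrightarrow> finite T \<Longrightarrow> finite (inj_funcset S T)"
  unfolding inj_funcset_def by (rule finite_subset[of _ "S \<rightarrow>\<^sub>E T"]) (auto intro: finite_PiE)

lemma prod_of_nat_diff_lessThan:
  "(\<Prod>k<n. of_nat (c - k)) = (\<Prod>k<n. of_nat c - of_nat k :: 'a :: comm_ring_1)"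
proof (cases "n \<le> c")
  case True
  then show ?thesis by (auto intro!: prod.cong)
next
  case False
  then have "c \<in> {..<n}" by simp
  then have "(\<Prod>k<n. of_nat (c - k) :: 'a) = 0" "(\<Prod>k<n. of_nat c - of_nat k :: 'a) = 0"
    by (auto intro!: prod_zero bexI[where x = c])
  then show ?thesis by simp
qed

lemma card_inj_funcset:
  assumes "finite S" "finite T"
  shows "real (card (inj_funcset S T)) = (\<Prod>k<card S. real (card T) - real k)"
  using card_inj_on_subset_funcset[OF assms subset_refl]
  by (simp add: inj_funcset_def atLeast0LessThan prod_of_nat_diff_lessThan)

lemma falling_factorial_nonneg: "0 \<le> (\<Prod>k<m. real N - real k)"
proof (cases "N < m")
  case True
  then have "N \<in> {..<m}" by simp
  then show ?thesis by (auto simp: prod_zero)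
qed (auto intro: prod_nonneg)

lemma falling_factorial_Suc_Suc:
  "(\<Prod>k<Suc (Suc m). real N - real k) = real N * (real N - 1) * (\<Prod>k<m. real N - 2 - real k)"
  by (simp only: prod.lessThan_Suc_shift) (simp add: algebra_simps)

lemma card_inj_funcset_fix2_le:
  assumes "finite S" "finite T" "a \<in> S" "b \<in> S"
  shows "card {f \<in> inj_funcset S T. f a = u \<and> f b = v}
    \<le> card (inj_funcset (S - {a, b}) (T - {u, v}))"
proof (rule card_inj_on_le[of "\<lambda>f. restrict f (S - {a, b})"])
  show "inj_on (\<lambda>f. restrict f (S - {a, b})) {f \<in> inj_funcset S T. f a = u \<and> f b = v}"
  proof (rule inj_onI)
    fix f g
    assume f: "f \<in> {f \<in> inj_funcset S T. f a = u \<and> f b = v}"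
      and g: "g \<in> {f \<in> inj_funcset S T. f a = u \<and> f b = v}"
      and restr: "restrict f (S - {a, b}) = restrict g (S - {a, b})"
    have "f x = g x" for x
    proof (cases "x \<in> S - {a, b}")
      case True
      then show ?thesis using fun_cong[OF restr, of x] by simp
    next
      case False
      then show ?thesis using f g by (auto simp: inj_funcset_def PiE_def extensional_def)
    qed
    then show "f = g" ..
  qed
  show "(\<lambda>f. restrict f (S - {a, b})) ` {f \<in> inj_funcset S T. f a = u \<and> f b = v}
      \<subseteq> inj_funcset (S - {a, b}) (T - {u, v})"
    using assms(3,4) by (auto simp: inj_funcset_def inj_on_def)
  show "finite (inj_funcset (S - {a, b}) (T - {u, v}))"
    using assms(1,2) by (simp add: finite_inj_funcset)
qed

lemma card_inj_funcset_edge_image_le: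
  assumes "finite S" "finite T" "a \<in> S" "b \<in> S" "a \<noteq> b" "u \<in> T" "v \<in> T" "u \<noteq> v"
  shows "real (card {f \<in> inj_funcset S T. f ` {a, b} = {u, v}})
    \<le> 2 * (\<Prod>k<card S - 2. real (card T) - 2 - real k)"
proof -
  let ?fix = "\<lambda>u v. {f \<in> inj_funcset S T. f a = u \<and> f b = v}"
  have fin: "finite (?fix u v)" "finite (?fix v u)"
    using assms(1,2) by (auto intro: finite_subset[OF _ finite_inj_funcset])
  have "{f \<in> inj_funcset S T. f ` {a, b} = {u, v}} \<subseteq> ?fix u v \<union> ?fix v u"
    using assms(8) by (auto simp: doubleton_eq_iff)
  then have "card {f \<in> inj_funcset S T. f ` {a, b} = {u, v}} \<le> card (?fix u v) + card (?fix v u)"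
    using fin by (meson card_Un_le card_mono finite_UnI le_trans)
  also have "\<dots> \<le> 2 * card (inj_funcset (S - {a, b}) (T - {u, v}))"
    using card_inj_funcset_fix2_le[OF assms(1-4), of u v]
      card_inj_funcset_fix2_le[OF assms(1-4), of v u]
    by (simp add: insert_commute)
  finally have "real (card {f \<in> inj_funcset S T. f ` {a, b} = {u, v}})
      \<le> 2 * real (card (inj_funcset (S - {a, b}) (T - {u, v})))"
    by linarith
  also have "\<dots> = 2 * (\<Prod>k<card S - 2. real (card T) - 2 - real k)"
  proof -
    have "card {u, v} \<le> card T"
      using assms(2,6,7) by (intro card_mono) auto
    then have "real (card (T - {u, v})) = real (card T) - 2"
      using assms(6-8) by (simp add: card_Diff_subset)
    moreover have "card (S - {a, b}) = card S - 2"
      using assms(3-5) by (simp add: card_Diff_subset)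
    ultimately show ?thesis
      using assms(1,2) by (simp add: card_inj_funcset)
  qed
  finally show ?thesis .
qed

lemma finite_pairs: "finite (pairs N)"
  by (rule finite_subset[of _ "Pow {0..<N}"]) (auto simp: pairs_def)

lemma inj_hom_count_eq:
  "inj_hom_count m E N X = card {\<phi> \<in> inj_funcset {0..<m} {0..<N}. \<forall>f\<in>E. \<phi> ` f \<in> X}"
  by (simp add: inj_hom_count_def inj_funcset_def)

lemma inj_hom_count_mono:
  assumes "X \<subseteq> Y"
  shows "inj_hom_count m E N X \<le> inj_hom_count m E N Y"
  unfolding inj_hom_count_eq using assms
  by (intro card_mono) (auto intro: finite_subset[OF _ finite_inj_funcset])

lemma inj_hom_count_insert_le:
  assumes "finite E"
  shows "inj_hom_count m E N (insert e X) \<le> inj_hom_count m E N (X - {e})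
    + (\<Sum>f\<in>E. card {\<phi> \<in> inj_funcset {0..<m} {0..<N}. \<phi> ` f = e})"
proof -
  let ?A = "\<lambda>Y. {\<phi> \<in> inj_funcset {0..<m} {0..<N}. \<forall>f\<in>E. \<phi> ` f \<in> Y}"
  let ?B = "\<lambda>f. {\<phi> \<in> inj_funcset {0..<m} {0..<N}. \<phi> ` f = e}"
  have fin: "finite (?A Y)" "finite (?B f)" for Y f
    by (auto intro: finite_subset[OF _ finite_inj_funcset])
  have "?A (insert e X) \<subseteq> ?A (X - {e}) \<union> (\<Union>f\<in>E. ?B f)"
    by blast
  then have "card (?A (insert e X)) \<le> card (?A (X - {e}) \<union> (\<Union>f\<in>E. ?B f))"
    using assms fin by (intro card_mono) blast+
  also have "\<dots> \<le> card (?A (X - {e})) + (\<Sum>f\<in>E. card (?B f))"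
    using card_Un_le[of "?A (X - {e})" "\<Union>f\<in>E. ?B f"] card_UN_le[OF assms, of ?B] by linarith
  finally show ?thesis
    unfolding inj_hom_count_eq .
qed

lemma inj_hom_count_insert_diff_le:
  assumes E: "E \<subseteq> pairs m" and e: "e \<in> pairs N"
  shows "real N * (real N - 1)
      * (real (inj_hom_count m E N (insert e X)) - real (inj_hom_count m E N (X - {e})))
    \<le> 2 * real (card E) * (\<Prod>k<m. real N - real k)"
proof (cases "E = {}")
  case True
  then show ?thesis
    by (simp add: inj_hom_count_def)
next
  case False
  define R where "R = (\<Prod>k<m - 2. real N - 2 - real k)"
  obtain u v where uv: "u < N" "v < N" "u \<noteq> v" "e = {u, v}"
    using e by (auto simp: pairs_def)
  have finE: "finite E"
    using E finite_pairs by (rule finite_subset)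
  have edge_bound: "real (card {\<phi> \<in> inj_funcset {0..<m} {0..<N}. \<phi> ` f = e}) \<le> 2 * R"
    if f: "f \<in> E" for f
  proof -
    obtain a b where "a < m" "b < m" "a \<noteq> b" "f = {a, b}"
      using f E by (auto simp: pairs_def)
    then show ?thesis
      using card_inj_funcset_edge_image_le[of "{0..<m}" "{0..<N}" a b u v] uv
      by (simp add: R_def)
  qed
  have "real (inj_hom_count m E N (insert e X)) - real (inj_hom_count m E N (X - {e}))
      \<le> (\<Sum>f\<in>E. real (card {\<phi> \<in> inj_funcset {0..<m} {0..<N}. \<phi> ` f = e}))"
    using inj_hom_count_insert_le[OF finE, of m N e X] by (simp flip: of_nat_sum)
  also have "\<dots> \<le> (\<Sum>f\<in>E. 2 * R)"
    by (rule sum_mono) (rule edge_bound)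
  also have "\<dots> = 2 * real (card E) * R"
    by simp
  finally have diff_le:
    "real (inj_hom_count m E N (insert e X)) - real (inj_hom_count m E N (X - {e}))
      \<le> 2 * real (card E) * R" .
  obtain f where "f \<in> E"
    using False by blast
  then have "2 \<le> m"
    using E by (auto simp: pairs_def)
  then have falling_eq: "(\<Prod>k<m. real N - real k) = real N * (real N - 1) * R"
    using falling_factorial_Suc_Suc[of N "m - 2"] by (simp add: R_def numeral_2_eq_2 Suc_diff_Suc)
  have "0 \<le> real N * (real N - 1)"
    using uv(1) by simp
  then have "real N * (real N - 1)
      * (real (inj_hom_count m E N (insert e X)) - real (inj_hom_count m E N (X - {e})))
    \<le> real N * (real N - 1) * (2 * real (card E) * R)"
    by (rule mult_left_mono[OF diff_le])
  also have "\<dots> = 2 * real (card E) * (\<Prod>k<m. real N - real k)"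
    by (simp add: falling_eq)
  finally show ?thesis .
qed

lemma hom_density_mono:
  assumes "X \<subseteq> Y"
  shows "hom_density m E N X \<le> hom_density m E N Y"
  unfolding hom_density_def
  using inj_hom_count_mono[OF assms] falling_factorial_nonneg
  by (intro divide_right_mono) auto

lemma hom_density_insert_diff_le:
  assumes "E \<subseteq> pairs m" "e \<in> pairs N"
  shows "real N * (real N - 1) * (hom_density m E N (insert e X) - hom_density m E N (X - {e}))
    \<le> 2 * real (card E)"
proof (cases "(\<Prod>k<m. real N - real k) = 0")
  case True
  then show ?thesis
    unfolding hom_density_def True by simp
next
  case False
  then have pos: "0 < (\<Prod>k<m. real N - real k)"
    using falling_factorial_nonneg[of N m] by linarith
  show ?thesis
    using inj_hom_count_insert_diff_le[OF assms, of X] pos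
    by (simp add: hom_density_def diff_divide_distrib[symmetric] pos_divide_le_eq)
qed

theorem lemma26:
  fixes N l :: nat and m :: "nat \<Rightarrow> nat" and E :: "nat \<Rightarrow> nat set set"
    and \<beta> :: "nat \<Rightarrow> real" and X :: "nat set set" and e :: "nat set"
  assumes "\<And>i. i < l \<Longrightarrow> E i \<subseteq> pairs (m i)"
    and "X \<subseteq> pairs N"
    and "e \<in> pairs N"
  shows "\<bar>disc_partial (subgraph_count_fun N l m E \<beta>) e X\<bar>
           \<le> (\<Sum>i<l. \<bar>\<beta> i\<bar> * real (card (E i)))"
proof -
  define D where "D i = real N * (real N - 1)
    * (hom_density (m i) (E i) N (insert e X) - hom_density (m i) (E i) N (X - {e}))" for i
  have D_bounds: "0 \<le> D i \<and> D i \<le> 2 * real (card (E i))" if "i < l" for i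
  proof
    have "0 \<le> real N * (real N - 1)"
      by (cases N) auto
    moreover have "hom_density (m i) (E i) N (X - {e}) \<le> hom_density (m i) (E i) N (insert e X)"
      by (rule hom_density_mono) blast
    ultimately show "0 \<le> D i"
      unfolding D_def by simp
    show "D i \<le> 2 * real (card (E i))"
      unfolding D_def using hom_density_insert_diff_le[OF assms(1)[OF that] assms(3)] .
  qed
  have "disc_partial (subgraph_count_fun N l m E \<beta>) e X = (\<Sum>i<l. \<beta> i * D i) / 2"
    unfolding disc_partial_def subgraph_count_fun_def D_def
    by (simp add: sum_subtractf[symmetric] sum_distrib_left algebra_simps)
  also have "\<bar>\<dots>\<bar> \<le> (\<Sum>i<l. \<bar>\<beta> i\<bar> * D i) / 2"
    using sum_abs[of "\<lambda>i. \<beta> i * D i" "{..<l}"] D_bounds by (simp add: abs_mult)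
  also have "\<dots> \<le> (\<Sum>i<l. \<bar>\<beta> i\<bar> * (2 * real (card (E i)))) / 2"
    using D_bounds by (intro divide_right_mono sum_mono mult_left_mono) auto
  also have "\<dots> = (\<Sum>i<l. \<bar>\<beta> i\<bar> * real (card (E i)))"
    by (simp add: sum_divide_distrib)
  finally show ?thesis .
qed

end
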